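(* Let $(M,\otimes,I,\lambda,a)$ be a monoidal category and let $C$ be an $M$-actegory. Regard $M$ as an $M$-actegory via $\odot_M=\otimes$. Then, as Tambara modules (i.e. up to isomorphism in the relevant hom-categories of $\mathit{Tamb}$, compatibly with strengths): (1) $R_I\cong L_I\cong M(-,=)$, where $R_I\in\mathit{Tamb}_{M,M}$ and $L_I\in\mathit{Tamb}_{M,M}$ are formed from the unit object $I$ of $M$ regarded as an object of the $M$-actegory $M$, and $M(-,=)$ is the hom-profunctor of $M$; (2) for every $x\in C$ and $m\in M$, $R_x\otimes R_m\cong R_{m\odot_C x}$ in $\mathit{Tamb}_{C,M}$ (with $R_m\in\mathit{Tamb}_{M,M}$); (3) for every $x\in C$ and $m\in M$, $L_m\otimes L_x\cong L_{m\odot_C x}$ in $\mathit{Tamb}_{M,C}$ (with $L_m\in\mathit{Tamb}_{M,M}$).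
   Context: $(M,\otimes,I,\lambda,a)$ is a monoidal category ($\lambda$ left unitor, $a$ associator). An $M$-actegory is a category $C$ with a functor $\odot_C:M\times C\to C$ and natural isomorphisms $\lambda_x:I\odot_C x\to x$, $a_{m,n,x}:(m\otimes n)\odot_C x\to m\odot_C(n\odot_C x)$ satisfying the standard coherence axioms with the monoidal structure of $M$; $M$ is itself an $M$-actegory with $\odot_M=\otimes$. Composition is written in diagrammatic order $f;g$ ($f$ first). For $M$-actegories $C,D$, a Tambara module $P\in\mathit{Tamb}_{C,D}$ is a functor $P:C^{op}\times D\to\mathrm{Set}$ together with maps $\mathrm{st}_{m,c,d}:P(c,d)\to P(m\odot_C c,m\odot_D d)$ natural in $c,d$ and (di)natural in $m$, compatible with the unitors and associators of the actegories; morphisms are natural transformations commuting with the strengths. $\mathit{Tamb}$ is the bicategory whose objects are $M$-actegories, whose hom-categories are $\mathit{Tamb}_{C,D}$, whose identity 1-cell on $C$ is the hom-profunctor $C(-,=)$ (strength given by the action), and whose composition of $P\in\mathit{Tamb}_{C,D}$ and $Q\in\mathit{Tamb}_{D,E}$ is $(P\otimes Q)(c,e)=\int^{d\in D}P(c,d)\times Q(d,e)$ with the induced strength. For $x\in C$: $R_x\in\mathit{Tamb}_{C,M}$ is the profunctor $(c,n)\mapsto C(c,n\odot_C x)$ with strength sending $h:c\to n\odot x$ to $(m\odot h);a^{-1}_{m,n,x}:m\odot c\to (m\otimes n)\odot x$; $L_x\in\mathit{Tamb}_{M,C}$ is $(n,c)\mapsto C(n\odot_C x,c)$ with strength sending $h:n\odot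 x\to c$ to $a_{m,n,x};(m\odot h)$. *)

theory Defs
  imports Main
begin

section \<open>Categories (arrows know their endpoints; composition in diagrammatic order)\<close>

record ('o,'a) cat =
  c_ob   :: "'o set"
  c_hom  :: "'o \<Rightarrow> 'o \<Rightarrow> 'a set"
  c_id   :: "'o \<Rightarrow> 'a"
  c_comp :: "'a \<Rightarrow> 'a \<Rightarrow> 'a"   (* c_comp f g = f ; g  (f first) *)
  c_dom  :: "'a \<Rightarrow> 'o"
  c_cod  :: "'a \<Rightarrow> 'o"

definition is_cat :: "('o,'a) cat \<Rightarrow> bool" where
  "is_cat C \<longleftrightarrow>
     (\<forall>x y. c_hom C x y \<noteq> {} \<longrightarrow> x \<in> c_ob C \<and> y \<in> c_ob C) \<and>
     (\<forall>x y f. f \<in> c_hom C x y \<longrightarrow> c_dom C f = x \<and> c_cod C f = y) \<and>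
     (\<forall>x\<in>c_ob C. c_id C x \<in> c_hom C x x) \<and>
     (\<forall>x y z f g. f \<in> c_hom C x y \<longrightarrow> g \<in> c_hom C y z \<longrightarrow> c_comp C f g \<in> c_hom C x z) \<and>
     (\<forall>x y f. f \<in> c_hom C x y \<longrightarrow> c_comp C (c_id C x) f = f \<and> c_comp C f (c_id C y) = f) \<and>
     (\<forall>w x y z f g h. f \<in> c_hom C w x \<longrightarrow> g \<in> c_hom C x y \<longrightarrow> h \<in> c_hom C y z \<longrightarrow>
        c_comp C (c_comp C f g) h = c_comp C f (c_comp C g h))"

definition iso_in :: "('o,'a) cat \<Rightarrow> 'o \<Rightarrow> 'o \<Rightarrow> 'a \<Rightarrow> bool" where
  "iso_in C x y f \<longleftrightarrow> f \<in> c_hom C x y \<and>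
     (\<exists>g\<in>c_hom C y x. c_comp C f g = c_id C x \<and> c_comp C g f = c_id C y)"

definition inv_in :: "('o,'a) cat \<Rightarrow> 'o \<Rightarrow> 'o \<Rightarrow> 'a \<Rightarrow> 'a" where
  "inv_in C x y f = (SOME g. g \<in> c_hom C y x \<and> c_comp C f g = c_id C x \<and> c_comp C g f = c_id C y)"

record ('m,'f) moncat =
  mc  :: "('m,'f) cat"
  tn  :: "'m \<Rightarrow> 'm \<Rightarrow> 'm"
  tna :: "'f \<Rightarrow> 'f \<Rightarrow> 'f"
  mI  :: "'m"
  lu  :: "'m \<Rightarrow> 'f"              (* left unitor  I\<otimes>m \<rightarrow> m *)
  ru  :: "'m \<Rightarrow> 'f"              (* right unitor m\<otimes>I \<rightarrow> m *)
  asc :: "'m \<Rightarrow> 'm \<Rightarrow> 'm \<Rightarrow> 'f"  (* associator (m\<otimes>n)\<otimes>p \<rightarrow> m\<otimes>(n\<otimes>p) *)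

definition is_moncat :: "('m,'f) moncat \<Rightarrow> bool" where
  "is_moncat M \<longleftrightarrow> (let C = mc M; T = tn M; Ta = tna M; I = mI M;
                        cp = c_comp C; hm = c_hom C; i = c_id C in
     is_cat C \<and>
     (\<forall>m\<in>c_ob C. \<forall>n\<in>c_ob C. T m n \<in> c_ob C) \<and>
     (\<forall>m m' n n' f g. f \<in> hm m m' \<longrightarrow> g \<in> hm n n' \<longrightarrow> Ta f g \<in> hm (T m n) (T m' n')) \<and>
     (\<forall>m\<in>c_ob C. \<forall>n\<in>c_ob C. Ta (i m) (i n) = i (T m n)) \<and>
     (\<forall>m m' m'' n n' n'' f f' g g'. f \<in> hm m m' \<longrightarrow> f' \<in> hm m' m'' \<longrightarrow>
        g \<in> hm n n' \<longrightarrow> g' \<in> hm n' n'' \<longrightarrow>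
        Ta (cp f f') (cp g g') = cp (Ta f g) (Ta f' g')) \<and>
     I \<in> c_ob C \<and>
     (\<forall>m\<in>c_ob C. iso_in C (T I m) m (lu M m)) \<and>
     (\<forall>m m' f. f \<in> hm m m' \<longrightarrow> cp (Ta (i I) f) (lu M m') = cp (lu M m) f) \<and>
     (\<forall>m\<in>c_ob C. iso_in C (T m I) m (ru M m)) \<and>
     (\<forall>m m' f. f \<in> hm m m' \<longrightarrow> cp (Ta f (i I)) (ru M m') = cp (ru M m) f) \<and>
     (\<forall>m\<in>c_ob C. \<forall>n\<in>c_ob C. \<forall>p\<in>c_ob C. iso_in C (T (T m n) p) (T m (T n p)) (asc M m n p)) \<and>
     (\<forall>m m' n n' p p' f g h. f \<in> hm m m' \<longrightarrow> g \<in> hm n n' \<longrightarrow> h \<in> hm p p' \<longrightarrow>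
        cp (Ta (Ta f g) h) (asc M m' n' p') = cp (asc M m n p) (Ta f (Ta g h))) \<and>
     (\<forall>m\<in>c_ob C. \<forall>n\<in>c_ob C. \<forall>p\<in>c_ob C. \<forall>q\<in>c_ob C.
        cp (asc M (T m n) p q) (asc M m n (T p q)) =
        cp (cp (Ta (asc M m n p) (i q)) (asc M m (T n p) q)) (Ta (i m) (asc M n p q))) \<and>
     (\<forall>m\<in>c_ob C. \<forall>n\<in>c_ob C.
        cp (asc M m I n) (Ta (i m) (lu M n)) = Ta (ru M m) (i n)))"

record ('m,'f,'c,'g) actegory =
  ac   :: "('c,'g) cat"
  act  :: "'m \<Rightarrow> 'c \<Rightarrow> 'c"
  acta :: "'f \<Rightarrow> 'g \<Rightarrow> 'g"
  alu  :: "'c \<Rightarrow> 'g"                (* unitor I \<odot> x \<rightarrow> x *)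
  aas  :: "'m \<Rightarrow> 'm \<Rightarrow> 'c \<Rightarrow> 'g"    (* associator (m\<otimes>n)\<odot>x \<rightarrow> m\<odot>(n\<odot>x) *)

definition is_actegory :: "('m,'f) moncat \<Rightarrow> ('m,'f,'c,'g) actegory \<Rightarrow> bool" where
  "is_actegory M A \<longleftrightarrow> (let MC = mc M; C = ac A; T = tn M; Ta = tna M; I = mI M;
        Ac = act A; Oa = acta A; cp = c_comp C; hm = c_hom C; i = c_id C; iM = c_id MC in
     is_moncat M \<and> is_cat C \<and>
     (\<forall>m\<in>c_ob MC. \<forall>x\<in>c_ob C. Ac m x \<in> c_ob C) \<and>
     (\<forall>m m' x x' u h. u \<in> c_hom MC m m' \<longrightarrow> h \<in> hm x x' \<longrightarrow> Oa u h \<in> hm (Ac m x) (Ac m' x')) \<and>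
     (\<forall>m\<in>c_ob MC. \<forall>x\<in>c_ob C. Oa (iM m) (i x) = i (Ac m x)) \<and>
     (\<forall>m m' m'' x x' x'' u u' h h'. u \<in> c_hom MC m m' \<longrightarrow> u' \<in> c_hom MC m' m'' \<longrightarrow>
        h \<in> hm x x' \<longrightarrow> h' \<in> hm x' x'' \<longrightarrow>
        Oa (c_comp MC u u') (cp h h') = cp (Oa u h) (Oa u' h')) \<and>
     (\<forall>x\<in>c_ob C. iso_in C (Ac I x) x (alu A x)) \<and>
     (\<forall>x x' h. h \<in> hm x x' \<longrightarrow> cp (Oa (iM I) h) (alu A x') = cp (alu A x) h) \<and>
     (\<forall>m\<in>c_ob MC. \<forall>n\<in>c_ob MC. \<forall>x\<in>c_ob C. iso_in C (Ac (T m n) x) (Ac m (Ac n x)) (aas A m n x)) \<and>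
     (\<forall>m m' n n' x x' u v h. u \<in> c_hom MC m m' \<longrightarrow> v \<in> c_hom MC n n' \<longrightarrow> h \<in> hm x x' \<longrightarrow>
        cp (Oa (Ta u v) h) (aas A m' n' x') = cp (aas A m n x) (Oa u (Oa v h))) \<and>
     (\<forall>m\<in>c_ob MC. \<forall>n\<in>c_ob MC. \<forall>p\<in>c_ob MC. \<forall>x\<in>c_ob C.
        cp (aas A (T m n) p x) (aas A m n (Ac p x)) =
        cp (cp (Oa (asc M m n p) (i x)) (aas A m (T n p) x)) (Oa (iM m) (aas A n p x))) \<and>
     (\<forall>m\<in>c_ob MC. \<forall>x\<in>c_ob C.
        cp (aas A I m x) (alu A (Ac m x)) = Oa (lu M m) (i x)) \<and>
     (\<forall>m\<in>c_ob MC. \<forall>x\<in>c_ob C.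
        cp (aas A m I x) (Oa (iM m) (alu A x)) = Oa (ru M m) (i x)))"

definition self_act :: "('m,'f) moncat \<Rightarrow> ('m,'f,'m,'f) actegory" where
  "self_act M = \<lparr> ac = mc M, act = tn M, acta = tna M, alu = lu M, aas = asc M \<rparr>"

section \<open>Tambara modules (profunctors C^op x D \<rightarrow> Set with strength)\<close>

text \<open>pobj P c d = P(c,d); pmap P f g x = P(f,g)(x) for f : c' \<rightarrow> c in C, g : d \<rightarrow> d' in D;
  pst P m c d = st_{m,c,d}.\<close>
record ('m,'c,'d,'x,'g,'h) tamb =
  pobj :: "'c \<Rightarrow> 'd \<Rightarrow> 'x set"
  pmap :: "'g \<Rightarrow> 'h \<Rightarrow> 'x \<Rightarrow> 'x"
  pst  :: "'m \<Rightarrow> 'c \<Rightarrow> 'd \<Rightarrow> 'x \<Rightarrow> 'x"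

definition tamb_iso :: "('m,'f) moncat \<Rightarrow> ('m,'f,'c,'g) actegory \<Rightarrow> ('m,'f,'d,'h) actegory
    \<Rightarrow> ('m,'c,'d,'x,'g,'h) tamb \<Rightarrow> ('m,'c,'d,'y,'g,'h) tamb \<Rightarrow> bool" where
  "tamb_iso M C D P Q \<longleftrightarrow> (\<exists>\<phi> :: 'c \<Rightarrow> 'd \<Rightarrow> 'x \<Rightarrow> 'y.
     (\<forall>c\<in>c_ob (ac C). \<forall>d\<in>c_ob (ac D). bij_betw (\<phi> c d) (pobj P c d) (pobj Q c d)) \<and>
     (\<forall>c c' d d' f g x. f \<in> c_hom (ac C) c' c \<longrightarrow> g \<in> c_hom (ac D) d d' \<longrightarrow> x \<in> pobj P c d \<longrightarrow>
        \<phi> c' d' (pmap P f g x) = pmap Q f g (\<phi> c d x)) \<and>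
     (\<forall>m\<in>c_ob (mc M). \<forall>c\<in>c_ob (ac C). \<forall>d\<in>c_ob (ac D). \<forall>x\<in>pobj P c d.
        \<phi> (act C m c) (act D m d) (pst P m c d x) = pst Q m c d (\<phi> c d x)))"

definition hom_tamb :: "('m,'f) moncat \<Rightarrow> ('m,'f,'c,'g) actegory \<Rightarrow> ('m,'c,'c,'g,'g,'g) tamb" where
  "hom_tamb M C = \<lparr> pobj = (\<lambda>c d. c_hom (ac C) c d),
                    pmap = (\<lambda>f g h. c_comp (ac C) (c_comp (ac C) f h) g),
                    pst = (\<lambda>m c d h. acta C (c_id (mc M) m) h) \<rparr>"

definition R_tamb :: "('m,'f) moncat \<Rightarrow> ('m,'f,'c,'g) actegory \<Rightarrow> 'c \<Rightarrow> ('m,'c,'m,'g,'g,'f) tamb" where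
  "R_tamb M C x = \<lparr> pobj = (\<lambda>c n. c_hom (ac C) c (act C n x)),
      pmap = (\<lambda>f u h. c_comp (ac C) (c_comp (ac C) f h) (acta C u (c_id (ac C) x))),
      pst = (\<lambda>m c n h. c_comp (ac C) (acta C (c_id (mc M) m) h)
               (inv_in (ac C) (act C (tn M m n) x) (act C m (act C n x)) (aas C m n x))) \<rparr>"

definition L_tamb :: "('m,'f) moncat \<Rightarrow> ('m,'f,'c,'g) actegory \<Rightarrow> 'c \<Rightarrow> ('m,'m,'c,'g,'f,'g) tamb" where
  "L_tamb M C x = \<lparr> pobj = (\<lambda>n c. c_hom (ac C) (act C n x) c),
      pmap = (\<lambda>u f h. c_comp (ac C) (c_comp (ac C) (acta C u (c_id (ac C) x)) h) f),
      pst = (\<lambda>m n c h. c_comp (ac C) (aas C m n x) (acta C (c_id (mc M) m) h)) \<rparr>"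

text \<open>Composition of 1-cells: the coend \<integral>^d P(c,d) \<times> Q(d,e), as the quotient of
  \<Sigma>_d P(c,d) \<times> Q(d,e) by the equivalence relation generated by
  (d', P(c,g) p, q) ~ (d, p, Q(g,e) q) for g : d \<rightarrow> d'.\<close>
definition coend_carrier :: "('m,'f,'d,'h) actegory \<Rightarrow> ('m,'c,'d,'x,'g,'h) tamb
     \<Rightarrow> ('m,'d,'e,'y,'h,'k) tamb \<Rightarrow> 'c \<Rightarrow> 'e \<Rightarrow> ('d \<times> 'x \<times> 'y) set" where
  "coend_carrier D P Q c e = {(d,p,q). d \<in> c_ob (ac D) \<and> p \<in> pobj P c d \<and> q \<in> pobj Q d e}"

definition coend_gen :: "('m,'f,'c,'g) actegory \<Rightarrow> ('m,'f,'d,'h) actegory \<Rightarrow> ('m,'f,'e,'k) actegory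
     \<Rightarrow> ('m,'c,'d,'x,'g,'h) tamb \<Rightarrow> ('m,'d,'e,'y,'h,'k) tamb \<Rightarrow> 'c \<Rightarrow> 'e
     \<Rightarrow> (('d \<times> 'x \<times> 'y) \<times> ('d \<times> 'x \<times> 'y)) set" where
  "coend_gen C D E P Q c e =
     {((d', pmap P (c_id (ac C) c) g p, q), (d, p, pmap Q g (c_id (ac E) e) q)) | d d' g p q.
        d \<in> c_ob (ac D) \<and> d' \<in> c_ob (ac D) \<and> g \<in> c_hom (ac D) d d' \<and>
        p \<in> pobj P c d \<and> q \<in> pobj Q d' e}"

definition coend_eqv where
  "coend_eqv C D E P Q c e = (coend_gen C D E P Q c e \<union> (coend_gen C D E P Q c e)\<inverse>)\<^sup>*"

definition tamb_comp :: "('m,'f,'c,'g) actegory \<Rightarrow> ('m,'f,'d,'h) actegory \<Rightarrow> ('m,'f,'e,'k) actegory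
     \<Rightarrow> ('m,'c,'d,'x,'g,'h) tamb \<Rightarrow> ('m,'d,'e,'y,'h,'k) tamb
     \<Rightarrow> ('m,'c,'e,('d \<times> 'x \<times> 'y) set,'g,'k) tamb" where
  "tamb_comp C D E P Q = \<lparr>
     pobj = (\<lambda>c e. coend_carrier D P Q c e // coend_eqv C D E P Q c e),
     pmap = (\<lambda>f k X. coend_eqv C D E P Q (c_dom (ac C) f) (c_cod (ac E) k) ``
               {(case (SOME t. t \<in> X) of (d,p,q) \<Rightarrow>
                  (d, pmap P f (c_id (ac D) d) p, pmap Q (c_id (ac D) d) k q))}),
     pst = (\<lambda>m c e X. coend_eqv C D E P Q (act C m c) (act E m e) ``
               {(case (SOME t. t \<in> X) of (d,p,q) \<Rightarrow>
                  (act D m d, pst P m c d p, pst Q m d e q))}) \<rparr>"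

end

theory Submission
  imports Defs
begin

text \<open>All three isomorphisms are co-Yoneda reductions corrected by coherence isomorphisms.
  For (1), composing with the right unitor \<open>\<rho>\<^sub>n : n \<otimes> I \<rightarrow> n\<close> identifies \<open>M(c, n \<otimes> I)\<close> with
  \<open>M(c, n)\<close> (and \<open>M(n \<otimes> I, c)\<close> with \<open>M(n, c)\<close>); that this respects the strengths is Kelly's identity
  \<open>\<rho>\<^sub>m\<^sub>\<otimes>\<^sub>n = a\<^sub>m\<^sub>,\<^sub>n\<^sub>,\<^sub>I ; (m \<otimes> \<rho>\<^sub>n)\<close>.
  For (2), a pair \<open>p : c \<rightarrow> d \<odot> x\<close>, \<open>q : d \<rightarrow> e \<otimes> m\<close> is merged into
  \<open>p ; (q \<odot> x) ; a\<^sub>e\<^sub>,\<^sub>m\<^sub>,\<^sub>x : c \<rightarrow> e \<odot> (m \<odot> x)\<close>. This is constant on coend classes, and one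
  generating step moves \<open>q\<close> into the first factor, so every class contains the pair
  \<open>(h ; a\<^sup>-\<^sup>1, id)\<close> determined by its image \<open>h\<close>: the merge map is bijective. Compatibility with the
  strengths is the pentagon axiom of the action. (3) is dual, merging \<open>p : n \<otimes> m \<rightarrow> d\<close>,
  \<open>q : d \<odot> x \<rightarrow> c\<close> into \<open>a\<^sup>-\<^sup>1\<^sub>n\<^sub>,\<^sub>m\<^sub>,\<^sub>x ; (p \<odot> x) ; q\<close>.\<close>

section \<open>Quotients by the equivalence closure of a relation\<close>

abbreviation equiv_closure :: "('a \<times> 'a) set \<Rightarrow> ('a \<times> 'a) set" where
  "equiv_closure r \<equiv> (r \<union> r\<inverse>)\<^sup>*"

lemma equiv_closure_closed:
  assumes "r \<subseteq> A \<times> A" and "(a, b) \<in> equiv_closure r" and "a \<in> A"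
  shows "b \<in> A"
  using assms(2,3,1) by (induction rule: rtrancl_induct) auto

lemma equiv_closure_invariant:
  assumes "\<And>u v. (u, v) \<in> r \<Longrightarrow> F u = F v" and "(a, b) \<in> equiv_closure r"
  shows "F b = F a"
  using assms(2) by (induction rule: rtrancl_induct) (auto dest: assms(1))

lemma some_in_rtrancl_class: "(a, SOME b. b \<in> r\<^sup>* `` {a}) \<in> r\<^sup>*"
  using someI[of "\<lambda>b. b \<in> r\<^sup>* `` {a}" a] by blast

lemma invariant_class_representative:
  assumes "\<And>u v. (u, v) \<in> r \<Longrightarrow> F u = F v"
  shows "F (SOME b. b \<in> equiv_closure r `` {a}) = F a"
  using equiv_closure_invariant[OF assms some_in_rtrancl_class] .

lemma class_representative_in:
  assumes "r \<subseteq> A \<times> A" and "X \<in> A // equiv_closure r"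
  shows "(SOME b. b \<in> X) \<in> A"
  using assms equiv_closure_closed[OF assms(1) some_in_rtrancl_class] unfolding quotient_def by blast

lemma bij_betw_quotient_by_representative:
  assumes invariant: "\<And>u v. (u, v) \<in> r \<Longrightarrow> F u = F v" and r: "r \<subseteq> A \<times> A"
    and F: "\<And>a. a \<in> A \<Longrightarrow> F a \<in> B"
    and s: "\<And>b. b \<in> B \<Longrightarrow> s b \<in> A" and F_s: "\<And>b. b \<in> B \<Longrightarrow> F (s b) = b"
    and s_F: "\<And>a. a \<in> A \<Longrightarrow> (a, s (F a)) \<in> equiv_closure r"
  shows "bij_betw (\<lambda>X. F (SOME a. a \<in> X)) (A // equiv_closure r) B"
proof -
  let ?R = "equiv_closure r"
  have sym: "sym ?R" by (simp add: sym_Un_converse sym_rtrancl)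
  have F_rep: "F (SOME b. b \<in> ?R `` {a}) = F a" for a
    using invariant_class_representative[of r F, OF invariant] .
  show ?thesis
  proof (rule bij_betwI')
    fix X Y assume "X \<in> A // ?R" "Y \<in> A // ?R"
    then obtain a b where a: "a \<in> A" "X = ?R `` {a}" and b: "b \<in> A" "Y = ?R `` {b}"
      unfolding quotient_def by blast
    show "(F (SOME a. a \<in> X) = F (SOME a. a \<in> Y)) = (X = Y)"
    proof
      assume "F (SOME a. a \<in> X) = F (SOME a. a \<in> Y)"
      then have "F a = F b" using a b F_rep by simp
      then have "(a, s (F b)) \<in> ?R" "(b, s (F b)) \<in> ?R" using s_F a b by metis+
      then have ab: "(a, b) \<in> ?R" using symD[OF sym] rtrancl_trans by metis
      then have ba: "(b, a) \<in> ?R" using symD[OF sym] by metis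
      show "X = Y" unfolding a b using rtrancl_trans[OF ab] rtrancl_trans[OF ba] by blast
    qed simp
  next
    show "F (SOME a. a \<in> X) \<in> B" if "X \<in> A // ?R" for X
      using that F F_rep unfolding quotient_def by auto
  next
    fix b assume "b \<in> B"
    then have "?R `` {s b} \<in> A // ?R" and "b = F (SOME a. a \<in> ?R `` {s b})"
      using s F_s F_rep unfolding quotient_def by auto
    then show "\<exists>X \<in> A // ?R. b = F (SOME a. a \<in> X)" by blast
  qed
qed

section \<open>Categories and monoidal categories\<close>

locale category =
  fixes C :: "('o,'a) cat"
  assumes is_cat: "is_cat C"
begin

definition arr :: "'a \<Rightarrow> bool" where
  "arr f \<longleftrightarrow> f \<in> c_hom C (c_dom C f) (c_cod C f)"

lemma hom_ob: "f \<in> c_hom C x y \<Longrightarrow> x \<in> c_ob C \<and> y \<in> c_ob C"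
  using is_cat unfolding is_cat_def by fast

lemma hom_dom_cod: "f \<in> c_hom C x y \<Longrightarrow> c_dom C f = x \<and> c_cod C f = y"
  using is_cat unfolding is_cat_def by fast

lemma id_in_hom: "x \<in> c_ob C \<Longrightarrow> c_id C x \<in> c_hom C x x"
  using is_cat unfolding is_cat_def by fast

lemma comp_in_hom: "f \<in> c_hom C x y \<Longrightarrow> g \<in> c_hom C y z \<Longrightarrow> c_comp C f g \<in> c_hom C x z"
  using is_cat unfolding is_cat_def by fast

lemma comp_id_in_hom: "f \<in> c_hom C x y \<Longrightarrow> c_comp C (c_id C x) f = f \<and> c_comp C f (c_id C y) = f"
  using is_cat unfolding is_cat_def by fast

lemma comp_assoc_in_hom:
  "f \<in> c_hom C w x \<Longrightarrow> g \<in> c_hom C x y \<Longrightarrow> h \<in> c_hom C y z \<Longrightarrow>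
   c_comp C (c_comp C f g) h = c_comp C f (c_comp C g h)"
  using is_cat unfolding is_cat_def by fast

lemma in_hom_iff: "f \<in> c_hom C x y \<longleftrightarrow> arr f \<and> c_dom C f = x \<and> c_cod C f = y"
  using hom_dom_cod arr_def by metis

lemma arr_dom_cod_ob [simp]: "arr f \<Longrightarrow> c_dom C f \<in> c_ob C" "arr f \<Longrightarrow> c_cod C f \<in> c_ob C"
  using hom_ob arr_def by blast+

lemma id_simps [simp]:
  assumes "x \<in> c_ob C"
  shows "arr (c_id C x)" "c_dom C (c_id C x) = x" "c_cod C (c_id C x) = x"
  using id_in_hom[OF assms] in_hom_iff by blast+

lemma comp_simps [simp]:
  assumes "arr f" "arr g" "c_cod C f = c_dom C g"
  shows "arr (c_comp C f g)" "c_dom C (c_comp C f g) = c_dom C f" "c_cod C (c_comp C f g) = c_cod C g"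
  using assms comp_in_hom in_hom_iff by metis+

lemma comp_id_left [simp]: "arr f \<Longrightarrow> c_dom C f = x \<Longrightarrow> c_comp C (c_id C x) f = f"
  using comp_id_in_hom in_hom_iff by metis

lemma comp_id_right [simp]: "arr f \<Longrightarrow> c_cod C f = y \<Longrightarrow> c_comp C f (c_id C y) = f"
  using comp_id_in_hom in_hom_iff by metis

lemma comp_assoc [simp]:
  "arr f \<Longrightarrow> arr g \<Longrightarrow> arr h \<Longrightarrow> c_cod C f = c_dom C g \<Longrightarrow> c_cod C g = c_dom C h \<Longrightarrow>
   c_comp C (c_comp C f g) h = c_comp C f (c_comp C g h)"
  using comp_assoc_in_hom in_hom_iff by metis

lemma inv_in_props:
  assumes "iso_in C x y f"
  shows "inv_in C x y f \<in> c_hom C y x \<and> c_comp C f (inv_in C x y f) = c_id C x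
    \<and> c_comp C (inv_in C x y f) f = c_id C y"
proof -
  have "\<exists>g. g \<in> c_hom C y x \<and> c_comp C f g = c_id C x \<and> c_comp C g f = c_id C y"
    using assms unfolding iso_in_def by blast
  then show ?thesis unfolding inv_in_def by (rule someI_ex)
qed

lemma iso_simps [simp]:
  assumes "iso_in C x y f"
  shows "arr f" "c_dom C f = x" "c_cod C f = y"
    "arr (inv_in C x y f)" "c_dom C (inv_in C x y f) = y" "c_cod C (inv_in C x y f) = x"
    "c_comp C f (inv_in C x y f) = c_id C x" "c_comp C (inv_in C x y f) f = c_id C y"
  using assms inv_in_props[OF assms] unfolding iso_in_def in_hom_iff by auto

lemma iso_inv_cancel [simp]:
  assumes "iso_in C x y f"
  shows "arr h \<Longrightarrow> c_dom C h = y \<Longrightarrow> c_comp C (inv_in C x y f) (c_comp C f h) = h"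
    and "arr h \<Longrightarrow> c_dom C h = x \<Longrightarrow> c_comp C f (c_comp C (inv_in C x y f) h) = h"
  using assms by (simp_all flip: comp_assoc)

lemma iso_cancel_right:
  assumes "iso_in C x y f" "arr g" "arr h" "c_cod C g = x" "c_cod C h = x"
    and "c_comp C g f = c_comp C h f"
  shows "g = h"
proof -
  have "g = c_comp C (c_comp C g f) (inv_in C x y f)" using assms(1,2,4) by simp
  also have "\<dots> = c_comp C (c_comp C h f) (inv_in C x y f)" using assms(6) by simp
  also have "\<dots> = h" using assms(1,3,5) by simp
  finally show ?thesis .
qed

lemma iso_cancel_left:
  assumes "iso_in C x y f" "arr g" "arr h" "c_dom C g = y" "c_dom C h = y"
    and "c_comp C f g = c_comp C f h"
  shows "g = h"
  using iso_inv_cancel(1)[OF assms(1)] assms(2-6) by metis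

end

locale monoidal_category =
  fixes M :: "('m,'f) moncat"
  assumes is_moncat: "is_moncat M"
begin

sublocale M: category "mc M"
  using is_moncat by (simp add: is_moncat_def Let_def category_def)

abbreviation "T \<equiv> tn M"
abbreviation "Ta \<equiv> tna M"
abbreviation "I \<equiv> mI M"
abbreviation "mob \<equiv> c_ob (mc M)"
abbreviation "mcp \<equiv> c_comp (mc M)"
abbreviation "mid \<equiv> c_id (mc M)"
abbreviation "mdom \<equiv> c_dom (mc M)"
abbreviation "mcod \<equiv> c_cod (mc M)"

lemma tensor_ob [simp]: "m \<in> mob \<Longrightarrow> n \<in> mob \<Longrightarrow> T m n \<in> mob"
  using is_moncat by (simp add: is_moncat_def Let_def)

lemma unit_ob [simp]: "I \<in> mob"
  using is_moncat by (simp add: is_moncat_def Let_def)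

lemma tensor_id [simp]: "m \<in> mob \<Longrightarrow> n \<in> mob \<Longrightarrow> Ta (mid m) (mid n) = mid (T m n)"
  using is_moncat by (simp add: is_moncat_def Let_def)

lemma tensor_simps [simp]:
  assumes "M.arr f" "M.arr g"
  shows "M.arr (Ta f g)" "mdom (Ta f g) = T (mdom f) (mdom g)" "mcod (Ta f g) = T (mcod f) (mcod g)"
proof -
  have "Ta f g \<in> c_hom (mc M) (T (mdom f) (mdom g)) (T (mcod f) (mcod g))"
    using assms is_moncat by (simp add: M.arr_def is_moncat_def Let_def)
  then show "M.arr (Ta f g)" "mdom (Ta f g) = T (mdom f) (mdom g)" "mcod (Ta f g) = T (mcod f) (mcod g)"
    using M.in_hom_iff by blast+
qed

lemma tensor_comp:
  assumes "M.arr f" "M.arr f'" "M.arr g" "M.arr g'" "mcod f = mdom f'" "mcod g = mdom g'"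
  shows "Ta (mcp f f') (mcp g g') = mcp (Ta f g) (Ta f' g')"
proof -
  have "f \<in> c_hom (mc M) (mdom f) (mdom f')" "f' \<in> c_hom (mc M) (mdom f') (mcod f')"
    "g \<in> c_hom (mc M) (mdom g) (mdom g')" "g' \<in> c_hom (mc M) (mdom g') (mcod g')"
    using assms M.in_hom_iff by auto
  then show ?thesis using is_moncat by (simp add: is_moncat_def Let_def)
qed

lemma asc_iso [simp]:
  "m \<in> mob \<Longrightarrow> n \<in> mob \<Longrightarrow> p \<in> mob \<Longrightarrow> iso_in (mc M) (T (T m n) p) (T m (T n p)) (asc M m n p)"
  using is_moncat by (simp add: is_moncat_def Let_def)

lemma ru_iso [simp]: "m \<in> mob \<Longrightarrow> iso_in (mc M) (T m I) m (ru M m)"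
  using is_moncat by (simp add: is_moncat_def Let_def)

lemma lu_iso [simp]: "m \<in> mob \<Longrightarrow> iso_in (mc M) (T I m) m (lu M m)"
  using is_moncat by (simp add: is_moncat_def Let_def)

lemma ru_natural: "M.arr f \<Longrightarrow> mcp (Ta f (mid I)) (ru M (mcod f)) = mcp (ru M (mdom f)) f"
  using is_moncat by (simp add: M.arr_def is_moncat_def Let_def)

lemma asc_natural:
  "M.arr f \<Longrightarrow> M.arr g \<Longrightarrow> M.arr h \<Longrightarrow>
   mcp (Ta (Ta f g) h) (asc M (mcod f) (mcod g) (mcod h)) = mcp (asc M (mdom f) (mdom g) (mdom h)) (Ta f (Ta g h))"
  using is_moncat by (simp add: M.arr_def is_moncat_def Let_def)

lemma pentagon:
  "m \<in> mob \<Longrightarrow> n \<in> mob \<Longrightarrow> p \<in> mob \<Longrightarrow> q \<in> mob \<Longrightarrow>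
   mcp (asc M (T m n) p q) (asc M m n (T p q)) =
   mcp (mcp (Ta (asc M m n p) (mid q)) (asc M m (T n p) q)) (Ta (mid m) (asc M n p q))"
  using is_moncat by (simp add: is_moncat_def Let_def)

lemma triangle: "m \<in> mob \<Longrightarrow> n \<in> mob \<Longrightarrow> mcp (asc M m I n) (Ta (mid m) (lu M n)) = Ta (ru M m) (mid n)"
  using is_moncat by (simp add: is_moncat_def Let_def)

lemma asc_arr [simp]:
  assumes "m \<in> mob" "n \<in> mob" "p \<in> mob"
  shows "M.arr (asc M m n p)" "mdom (asc M m n p) = T (T m n) p" "mcod (asc M m n p) = T m (T n p)"
  using M.iso_simps(1-3)[OF asc_iso[OF assms]] by auto

lemma ru_arr [simp]:
  assumes "m \<in> mob"
  shows "M.arr (ru M m)" "mdom (ru M m) = T m I" "mcod (ru M m) = m"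
  using M.iso_simps(1-3)[OF ru_iso[OF assms]] by auto

lemma lu_arr [simp]:
  assumes "m \<in> mob"
  shows "M.arr (lu M m)" "mdom (lu M m) = T I m" "mcod (lu M m) = m"
  using M.iso_simps(1-3)[OF lu_iso[OF assms]] by auto

lemma tensor_comp_id_left:
  "m \<in> mob \<Longrightarrow> M.arr g \<Longrightarrow> M.arr g' \<Longrightarrow> mcod g = mdom g' \<Longrightarrow>
   Ta (mid m) (mcp g g') = mcp (Ta (mid m) g) (Ta (mid m) g')"
  using tensor_comp[of "mid m" "mid m" g g'] by simp

lemma tensor_comp_id_right:
  "m \<in> mob \<Longrightarrow> M.arr g \<Longrightarrow> M.arr g' \<Longrightarrow> mcod g = mdom g' \<Longrightarrow>
   Ta (mcp g g') (mid m) = mcp (Ta g (mid m)) (Ta g' (mid m))"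
  using tensor_comp[of g g' "mid m" "mid m"] by simp

lemma tensor_unit_faithful:
  assumes "M.arr f" "M.arr g" "mdom f = mdom g" "mcod f = mcod g" "Ta f (mid I) = Ta g (mid I)"
  shows "f = g"
proof -
  have "mcp (ru M (mdom f)) f = mcp (ru M (mdom f)) g"
    using ru_natural[OF assms(1)] ru_natural[OF assms(2)] assms by simp
  then show ?thesis using M.iso_cancel_left[OF ru_iso[of "mdom f"]] assms by simp
qed

text \<open>Kelly's lemma. As \<open>- \<otimes> I\<close> is faithful, it suffices to compare both sides after tensoring
  with \<open>I\<close>, where the triangle and pentagon axioms apply.\<close>

lemma ru_tensor:
  assumes m: "m \<in> mob" and n: "n \<in> mob"
  shows "ru M (T m n) = mcp (asc M m n I) (Ta (mid m) (ru M n))"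
proof (rule tensor_unit_faithful)
  let ?a = "asc M m n I"
  have asc_lu: "mcp (Ta (Ta (mid m) (mid n)) (lu M I)) ?a
      = mcp (asc M m n (T I I)) (Ta (mid m) (Ta (mid n) (lu M I)))"
    using asc_natural[of "mid m" "mid n" "lu M I"] m n by simp
  have asc_ru: "mcp (Ta (Ta (mid m) (ru M n)) (mid I)) ?a
      = mcp (asc M m (T n I) I) (Ta (mid m) (Ta (ru M n) (mid I)))"
    using asc_natural[of "mid m" "ru M n" "mid I"] m n by simp
  have "mcp (Ta (ru M (T m n)) (mid I)) ?a = mcp (asc M (T m n) I I) (mcp (Ta (mid (T m n)) (lu M I)) ?a)"
    using m n by (simp add: triangle[of "T m n" I, symmetric])
  also have "\<dots> = mcp (mcp (asc M (T m n) I I) (asc M m n (T I I))) (Ta (mid m) (Ta (mid n) (lu M I)))"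
    using asc_lu m n by simp
  also have "\<dots> = mcp (mcp (mcp (Ta ?a (mid I)) (asc M m (T n I) I)) (Ta (mid m) (asc M n I I)))
      (Ta (mid m) (Ta (mid n) (lu M I)))"
    using pentagon[of m n I I] m n by simp
  also have "\<dots> = mcp (Ta ?a (mid I))
      (mcp (asc M m (T n I) I) (Ta (mid m) (mcp (asc M n I I) (Ta (mid n) (lu M I)))))"
    using m n by (simp add: tensor_comp_id_left)
  also have "\<dots> = mcp (Ta ?a (mid I)) (mcp (asc M m (T n I) I) (Ta (mid m) (Ta (ru M n) (mid I))))"
    using triangle[of n I] m n by simp
  also have "\<dots> = mcp (Ta ?a (mid I)) (mcp (Ta (Ta (mid m) (ru M n)) (mid I)) ?a)"
    using asc_ru by simp
  also have "\<dots> = mcp (Ta (mcp ?a (Ta (mid m) (ru M n))) (mid I)) ?a"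
    using m n by (simp add: tensor_comp_id_right)
  finally have "mcp (Ta (ru M (T m n)) (mid I)) ?a = mcp (Ta (mcp ?a (Ta (mid m) (ru M n))) (mid I)) ?a" .
  then show "Ta (ru M (T m n)) (mid I) = Ta (mcp ?a (Ta (mid m) (ru M n))) (mid I)"
    by (rule M.iso_cancel_right[OF asc_iso[OF m n unit_ob], rotated 4]) (use m n in simp_all)
qed (use m n in simp_all)

lemma ru_inv_tensor:
  assumes m: "m \<in> mob" and n: "n \<in> mob"
  shows "mcp (inv_in (mc M) (T (T m n) I) (T m n) (ru M (T m n))) (asc M m n I)
    = Ta (mid m) (inv_in (mc M) (T n I) n (ru M n))"
proof -
  let ?i = "inv_in (mc M) (T (T m n) I) (T m n) (ru M (T m n))"
  let ?j = "inv_in (mc M) (T n I) n (ru M n)"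
  have "Ta (mid m) ?j = mcp ?i (mcp (ru M (T m n)) (Ta (mid m) ?j))"
    using m n by simp
  also have "\<dots> = mcp ?i (mcp (asc M m n I) (Ta (mid m) (mcp (ru M n) ?j)))"
    using m n by (simp add: ru_tensor flip: tensor_comp_id_left)
  also have "\<dots> = mcp ?i (asc M m n I)"
    using m n by simp
  finally show ?thesis by simp
qed

lemma ru_inv_natural:
  assumes u: "u \<in> c_hom (mc M) n' n"
  shows "mcp (inv_in (mc M) (T n' I) n' (ru M n')) (Ta u (mid I)) = mcp u (inv_in (mc M) (T n I) n (ru M n))"
proof -
  have a: "M.arr u" "mdom u = n'" "mcod u = n" using u M.in_hom_iff by auto
  then have ob: "n \<in> mob" "n' \<in> mob" using M.arr_dom_cod_ob by blast+
  let ?i = "inv_in (mc M) (T n' I) n' (ru M n')"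
  let ?j = "inv_in (mc M) (T n I) n (ru M n)"
  have "mcp ?i (Ta u (mid I)) = mcp ?i (mcp (mcp (Ta u (mid I)) (ru M n)) ?j)"
    using a ob by simp
  also have "\<dots> = mcp ?i (mcp (mcp (ru M n') u) ?j)"
    using ru_natural[OF a(1)] a by simp
  also have "\<dots> = mcp u ?j" using a ob by simp
  finally show ?thesis .
qed


lemma R_tamb_unit_iso_hom: "tamb_iso M (self_act M) (self_act M) (R_tamb M (self_act M) I) (hom_tamb M (self_act M))"
  unfolding tamb_iso_def R_tamb_def hom_tamb_def self_act_def
proof (simp, intro exI[of _ "\<lambda>c n h. mcp h (ru M n)"] conjI ballI allI impI)
  fix c n assume "c \<in> mob" "n \<in> mob"
  then show "bij_betw (\<lambda>h. mcp h (ru M n)) (c_hom (mc M) c (T n I)) (c_hom (mc M) c n)"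
    by (intro bij_betw_byWitness[where f'="\<lambda>h. mcp h (inv_in (mc M) (T n I) n (ru M n))"])
      (auto simp: M.in_hom_iff)
next
  fix c c' d d' f g h
  assume "f \<in> c_hom (mc M) c' c" "g \<in> c_hom (mc M) d d'" "h \<in> c_hom (mc M) c (T d I)"
  then show "mcp (mcp (mcp f h) (Ta g (mid I))) (ru M d') = mcp (mcp f (mcp h (ru M d))) g"
    using ru_natural[of g] by (auto simp: M.in_hom_iff)
next
  fix m c n h assume "m \<in> mob" "c \<in> mob" "n \<in> mob" "h \<in> c_hom (mc M) c (T n I)"
  then show "mcp (mcp (Ta (mid m) h) (inv_in (mc M) (T (T m n) I) (T m (T n I)) (asc M m n I)))
      (ru M (T m n)) = Ta (mid m) (mcp h (ru M n))"
    by (auto simp: M.in_hom_iff ru_tensor tensor_comp_id_left)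
qed

lemma L_tamb_unit_iso_hom: "tamb_iso M (self_act M) (self_act M) (L_tamb M (self_act M) I) (hom_tamb M (self_act M))"
  unfolding tamb_iso_def L_tamb_def hom_tamb_def self_act_def
proof (simp, intro exI[of _ "\<lambda>n c h. mcp (inv_in (mc M) (T n I) n (ru M n)) h"] conjI ballI allI impI)
  fix c n assume "c \<in> mob" "n \<in> mob"
  then show "bij_betw (\<lambda>h. mcp (inv_in (mc M) (T n I) n (ru M n)) h) (c_hom (mc M) (T n I) c) (c_hom (mc M) n c)"
    by (intro bij_betw_byWitness[where f'="\<lambda>h. mcp (ru M n) h"]) (auto simp: M.in_hom_iff)
next
  fix c c' d d' f g h
  assume f: "f \<in> c_hom (mc M) c' c" and gh: "g \<in> c_hom (mc M) d d'" "h \<in> c_hom (mc M) (T c I) d"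
  have f': "M.arr f" "mdom f = c'" "mcod f = c" using f M.in_hom_iff by auto
  then have "c \<in> mob" "c' \<in> mob" using M.arr_dom_cod_ob by blast+
  with f' gh have "mcp (inv_in (mc M) (T c' I) c' (ru M c')) (mcp (mcp (Ta f (mid I)) h) g)
      = mcp (mcp (inv_in (mc M) (T c' I) c' (ru M c')) (Ta f (mid I))) (mcp h g)"
    by (simp add: M.in_hom_iff)
  also have "\<dots> = mcp (mcp f (inv_in (mc M) (T c I) c (ru M c))) (mcp h g)"
    using ru_inv_natural[OF f] by simp
  finally show "mcp (inv_in (mc M) (T c' I) c' (ru M c')) (mcp (mcp (Ta f (mid I)) h) g) =
      mcp (mcp f (mcp (inv_in (mc M) (T c I) c (ru M c)) h)) g"
    using f' gh \<open>c \<in> mob\<close> \<open>c' \<in> mob\<close> by (simp add: M.in_hom_iff)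
next
  fix m c n h assume m: "m \<in> mob" and c: "c \<in> mob" and "n \<in> mob" "h \<in> c_hom (mc M) (T c I) n"
  then show "mcp (inv_in (mc M) (T (T m c) I) (T m c) (ru M (T m c))) (mcp (asc M m c I) (Ta (mid m) h)) =
      Ta (mid m) (mcp (inv_in (mc M) (T c I) c (ru M c)) h)"
    using ru_inv_tensor[OF m c] by (simp add: M.in_hom_iff tensor_comp_id_left flip: M.comp_assoc)
qed

end

section \<open>Actegories\<close>

locale monoidal_action =
  fixes M :: "('m,'f) moncat" and C :: "('m,'f,'c,'g) actegory"
  assumes is_actegory: "is_actegory M C"
begin

sublocale monoidal_category M
  using is_actegory by (simp add: is_actegory_def Let_def monoidal_category_def)

sublocale A: category "ac C"
  using is_actegory by (simp add: is_actegory_def Let_def category_def)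

abbreviation "Ac \<equiv> act C"
abbreviation "Oa \<equiv> acta C"
abbreviation "acp \<equiv> c_comp (ac C)"
abbreviation "aid \<equiv> c_id (ac C)"
abbreviation "adom \<equiv> c_dom (ac C)"
abbreviation "acod \<equiv> c_cod (ac C)"

lemma act_ob [simp]: "m \<in> mob \<Longrightarrow> x \<in> c_ob (ac C) \<Longrightarrow> Ac m x \<in> c_ob (ac C)"
  using is_actegory by (simp add: is_actegory_def Let_def)

lemma acta_id [simp]: "m \<in> mob \<Longrightarrow> x \<in> c_ob (ac C) \<Longrightarrow> Oa (mid m) (aid x) = aid (Ac m x)"
  using is_actegory by (simp add: is_actegory_def Let_def)

lemma acta_simps [simp]:
  assumes "M.arr u" "A.arr h"
  shows "A.arr (Oa u h)" "adom (Oa u h) = Ac (mdom u) (adom h)" "acod (Oa u h) = Ac (mcod u) (acod h)"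
proof -
  have "Oa u h \<in> c_hom (ac C) (Ac (mdom u) (adom h)) (Ac (mcod u) (acod h))"
    using assms is_actegory by (simp add: M.arr_def A.arr_def is_actegory_def Let_def)
  then show "A.arr (Oa u h)" "adom (Oa u h) = Ac (mdom u) (adom h)" "acod (Oa u h) = Ac (mcod u) (acod h)"
    using A.in_hom_iff by blast+
qed

lemma acta_comp:
  assumes "M.arr u" "M.arr u'" "A.arr h" "A.arr h'" "mcod u = mdom u'" "acod h = adom h'"
  shows "Oa (mcp u u') (acp h h') = acp (Oa u h) (Oa u' h')"
proof -
  have "u \<in> c_hom (mc M) (mdom u) (mdom u')" "u' \<in> c_hom (mc M) (mdom u') (mcod u')"
    "h \<in> c_hom (ac C) (adom h) (adom h')" "h' \<in> c_hom (ac C) (adom h') (acod h')"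
    using assms M.in_hom_iff A.in_hom_iff by auto
  then show ?thesis using is_actegory by (simp add: is_actegory_def Let_def)
qed

lemma aas_iso [simp]:
  "m \<in> mob \<Longrightarrow> n \<in> mob \<Longrightarrow> x \<in> c_ob (ac C) \<Longrightarrow> iso_in (ac C) (Ac (T m n) x) (Ac m (Ac n x)) (aas C m n x)"
  using is_actegory by (simp add: is_actegory_def Let_def)

lemma aas_natural:
  "M.arr u \<Longrightarrow> M.arr v \<Longrightarrow> A.arr h \<Longrightarrow>
   acp (Oa (Ta u v) h) (aas C (mcod u) (mcod v) (acod h)) = acp (aas C (mdom u) (mdom v) (adom h)) (Oa u (Oa v h))"
  using is_actegory by (simp add: M.arr_def A.arr_def is_actegory_def Let_def)

lemma aas_arr [simp]:
  assumes "m \<in> mob" "n \<in> mob" "x \<in> c_ob (ac C)"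
  shows "A.arr (aas C m n x)" "adom (aas C m n x) = Ac (T m n) x" "acod (aas C m n x) = Ac m (Ac n x)"
  using A.iso_simps(1-3)[OF aas_iso[OF assms]] by auto

lemma action_pentagon:
  assumes "m \<in> mob" "n \<in> mob" "p \<in> mob" "x \<in> c_ob (ac C)"
  shows "acp (aas C (T m n) p x) (aas C m n (Ac p x)) =
    acp (Oa (asc M m n p) (aid x)) (acp (aas C m (T n p) x) (Oa (mid m) (aas C n p x)))"
proof -
  have "acp (aas C (T m n) p x) (aas C m n (Ac p x)) =
      acp (acp (Oa (asc M m n p) (aid x)) (aas C m (T n p) x)) (Oa (mid m) (aas C n p x))"
    using assms is_actegory by (simp add: is_actegory_def Let_def)
  then show ?thesis using assms by simp
qed

lemma acta_comp_id:
  "x \<in> c_ob (ac C) \<Longrightarrow> M.arr u \<Longrightarrow> M.arr u' \<Longrightarrow> mcod u = mdom u' \<Longrightarrow>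
   Oa (mcp u u') (aid x) = acp (Oa u (aid x)) (Oa u' (aid x))"
  using acta_comp[of u u' "aid x" "aid x"] by simp

lemma acta_id_comp:
  "m \<in> mob \<Longrightarrow> A.arr h \<Longrightarrow> A.arr h' \<Longrightarrow> acod h = adom h' \<Longrightarrow>
   Oa (mid m) (acp h h') = acp (Oa (mid m) h) (Oa (mid m) h')"
  using acta_comp[of "mid m" "mid m" h h'] by simp

lemma aas_inv_natural:
  assumes u: "M.arr u" and v: "M.arr v" and h: "A.arr h"
  shows "acp (inv_in (ac C) (Ac (T (mdom u) (mdom v)) (adom h)) (Ac (mdom u) (Ac (mdom v) (adom h)))
      (aas C (mdom u) (mdom v) (adom h))) (Oa (Ta u v) h)
    = acp (Oa u (Oa v h)) (inv_in (ac C) (Ac (T (mcod u) (mcod v)) (acod h)) (Ac (mcod u) (Ac (mcod v) (acod h)))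
      (aas C (mcod u) (mcod v) (acod h)))"
  (is "acp ?i ?f = acp ?g ?j")
proof -
  have ob: "mdom u \<in> mob" "mdom v \<in> mob" "adom h \<in> c_ob (ac C)"
    "mcod u \<in> mob" "mcod v \<in> mob" "acod h \<in> c_ob (ac C)" using u v h by auto
  have "acp ?i ?f = acp ?i (acp (acp ?f (aas C (mcod u) (mcod v) (acod h))) ?j)"
    using u v h ob by simp
  also have "\<dots> = acp ?i (acp (acp (aas C (mdom u) (mdom v) (adom h)) ?g) ?j)"
    using aas_natural[OF u v h] by simp
  also have "\<dots> = acp ?g ?j" using u v h ob by simp
  finally show ?thesis .
qed

lemma acta_inv_cancel [simp]:
  assumes "iso_in (mc M) a b w" "x \<in> c_ob (ac C)" "A.arr z" "adom z = Ac b x"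
  shows "acp (Oa (inv_in (mc M) a b w) (aid x)) (acp (Oa w (aid x)) z) = z"
proof -
  have "a \<in> mob" "b \<in> mob" using M.iso_simps(1-3)[OF assms(1)] M.arr_dom_cod_ob by metis+
  then show ?thesis using assms by (simp flip: A.comp_assoc acta_comp_id)
qed

lemma action_pentagon_inv_asc:
  assumes m': "m' \<in> mob" and e: "e \<in> mob" and m: "m \<in> mob" and x: "x \<in> c_ob (ac C)"
  shows "acp (Oa (inv_in (mc M) (T (T m' e) m) (T m' (T e m)) (asc M m' e m)) (aid x)) (aas C (T m' e) m x) =
    acp (aas C m' (T e m) x) (acp (Oa (mid m') (aas C e m x))
      (inv_in (ac C) (Ac (T m' e) (Ac m x)) (Ac m' (Ac e (Ac m x))) (aas C m' e (Ac m x))))"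
proof -
  let ?ia = "inv_in (mc M) (T (T m' e) m) (T m' (T e m)) (asc M m' e m)"
  let ?J = "inv_in (ac C) (Ac (T m' e) (Ac m x)) (Ac m' (Ac e (Ac m x))) (aas C m' e (Ac m x))"
  have "acp (Oa ?ia (aid x)) (aas C (T m' e) m x)
      = acp (Oa ?ia (aid x)) (acp (acp (aas C (T m' e) m x) (aas C m' e (Ac m x))) ?J)"
    using assms by simp
  also have "\<dots> = acp (Oa ?ia (aid x))
      (acp (Oa (asc M m' e m) (aid x)) (acp (aas C m' (T e m) x) (acp (Oa (mid m') (aas C e m x)) ?J)))"
    using assms by (simp add: action_pentagon)
  also have "\<dots> = acp (aas C m' (T e m) x) (acp (Oa (mid m') (aas C e m x)) ?J)"
    using assms by simp
  finally show ?thesis .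
qed

lemma action_pentagon_inv_aas:
  assumes m': "m' \<in> mob" and n: "n \<in> mob" and m: "m \<in> mob" and x: "x \<in> c_ob (ac C)"
  shows "acp (inv_in (ac C) (Ac (T (T m' n) m) x) (Ac (T m' n) (Ac m x)) (aas C (T m' n) m x))
      (acp (Oa (asc M m' n m) (aid x)) (aas C m' (T n m) x))
    = acp (aas C m' n (Ac m x)) (Oa (mid m') (inv_in (ac C) (Ac (T n m) x) (Ac n (Ac m x)) (aas C n m x)))"
proof -
  let ?I1 = "inv_in (ac C) (Ac (T (T m' n) m) x) (Ac (T m' n) (Ac m x)) (aas C (T m' n) m x)"
  let ?I2 = "inv_in (ac C) (Ac (T n m) x) (Ac n (Ac m x)) (aas C n m x)"
  have "acp (aas C m' n (Ac m x)) (Oa (mid m') ?I2)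
      = acp ?I1 (acp (acp (aas C (T m' n) m x) (aas C m' n (Ac m x))) (Oa (mid m') ?I2))"
    using assms by simp
  also have "\<dots> = acp ?I1 (acp (Oa (asc M m' n m) (aid x))
      (acp (aas C m' (T n m) x) (acp (Oa (mid m') (aas C n m x)) (Oa (mid m') ?I2))))"
    using assms by (simp add: action_pentagon)
  also have "\<dots> = acp ?I1 (acp (Oa (asc M m' n m) (aid x)) (aas C m' (T n m) x))"
    using assms by (simp flip: acta_id_comp)
  finally show ?thesis by simp
qed

end

section \<open>Composites of Tambara modules\<close>

lemma self_act_simps [simp]:
  "ac (self_act M) = mc M" "act (self_act M) = tn M" "acta (self_act M) = tna M" "aas (self_act M) = asc M"
  by (simp_all add: self_act_def)

lemma R_tamb_simps [simp]:
  "pobj (R_tamb M C x) = (\<lambda>c n. c_hom (ac C) c (act C n x))"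
  "pmap (R_tamb M C x) = (\<lambda>f u h. c_comp (ac C) (c_comp (ac C) f h) (acta C u (c_id (ac C) x)))"
  "pst (R_tamb M C x) = (\<lambda>m c n h. c_comp (ac C) (acta C (c_id (mc M) m) h)
      (inv_in (ac C) (act C (tn M m n) x) (act C m (act C n x)) (aas C m n x)))"
  by (simp_all add: R_tamb_def)

lemma L_tamb_simps [simp]:
  "pobj (L_tamb M C x) = (\<lambda>n c. c_hom (ac C) (act C n x) c)"
  "pmap (L_tamb M C x) = (\<lambda>u f h. c_comp (ac C) (c_comp (ac C) (acta C u (c_id (ac C) x)) h) f)"
  "pst (L_tamb M C x) = (\<lambda>m n c h. c_comp (ac C) (aas C m n x) (acta C (c_id (mc M) m) h))"
  by (simp_all add: L_tamb_def)

text \<open>The isomorphism sends a coend class to the \<open>merge\<close> of its (chosen) representative;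
  \<open>split\<close> only witnesses bijectivity.\<close>

lemma tamb_comp_isoI:
  fixes C :: "('m,'f,'c,'g) actegory" and D :: "('m,'f,'d,'h) actegory" and E :: "('m,'f,'e,'k) actegory"
    and P :: "('m,'c,'d,'x,'g,'h) tamb" and Q :: "('m,'d,'e,'y,'h,'k) tamb" and R :: "('m,'c,'e,'z,'g,'k) tamb"
    and merge :: "'c \<Rightarrow> 'e \<Rightarrow> 'd \<times> 'x \<times> 'y \<Rightarrow> 'z" and split :: "'c \<Rightarrow> 'e \<Rightarrow> 'z \<Rightarrow> 'd \<times> 'x \<times> 'y"
  assumes cat_C: "category (ac C)" and cat_E: "category (ac E)"
    and act_ob_C: "\<And>m c. m \<in> c_ob (mc M) \<Longrightarrow> c \<in> c_ob (ac C) \<Longrightarrow> act C m c \<in> c_ob (ac C)"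
    and act_ob_E: "\<And>m e. m \<in> c_ob (mc M) \<Longrightarrow> e \<in> c_ob (ac E) \<Longrightarrow> act E m e \<in> c_ob (ac E)"
    and gen_in_carrier: "\<And>c e. c \<in> c_ob (ac C) \<Longrightarrow> e \<in> c_ob (ac E) \<Longrightarrow>
      coend_gen C D E P Q c e \<subseteq> coend_carrier D P Q c e \<times> coend_carrier D P Q c e"
    and merge_respects_gen: "\<And>c e u v. c \<in> c_ob (ac C) \<Longrightarrow> e \<in> c_ob (ac E) \<Longrightarrow>
      (u, v) \<in> coend_gen C D E P Q c e \<Longrightarrow> merge c e u = merge c e v"
    and merge_in: "\<And>c e t. c \<in> c_ob (ac C) \<Longrightarrow> e \<in> c_ob (ac E) \<Longrightarrow>
      t \<in> coend_carrier D P Q c e \<Longrightarrow> merge c e t \<in> pobj R c e"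
    and split_in: "\<And>c e h. c \<in> c_ob (ac C) \<Longrightarrow> e \<in> c_ob (ac E) \<Longrightarrow>
      h \<in> pobj R c e \<Longrightarrow> split c e h \<in> coend_carrier D P Q c e"
    and merge_split: "\<And>c e h. c \<in> c_ob (ac C) \<Longrightarrow> e \<in> c_ob (ac E) \<Longrightarrow>
      h \<in> pobj R c e \<Longrightarrow> merge c e (split c e h) = h"
    and split_merge: "\<And>c e t. c \<in> c_ob (ac C) \<Longrightarrow> e \<in> c_ob (ac E) \<Longrightarrow>
      t \<in> coend_carrier D P Q c e \<Longrightarrow> (t, split c e (merge c e t)) \<in> coend_eqv C D E P Q c e"
    and merge_natural: "\<And>c c' e e' f k d p q. f \<in> c_hom (ac C) c' c \<Longrightarrow> k \<in> c_hom (ac E) e e' \<Longrightarrow>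
      (d, p, q) \<in> coend_carrier D P Q c e \<Longrightarrow>
      (d, pmap P f (c_id (ac D) d) p, pmap Q (c_id (ac D) d) k q) \<in> coend_carrier D P Q c' e' \<and>
      merge c' e' (d, pmap P f (c_id (ac D) d) p, pmap Q (c_id (ac D) d) k q) = pmap R f k (merge c e (d, p, q))"
    and merge_strength: "\<And>m c e d p q. m \<in> c_ob (mc M) \<Longrightarrow> c \<in> c_ob (ac C) \<Longrightarrow> e \<in> c_ob (ac E) \<Longrightarrow>
      (d, p, q) \<in> coend_carrier D P Q c e \<Longrightarrow>
      (act D m d, pst P m c d p, pst Q m d e q) \<in> coend_carrier D P Q (act C m c) (act E m e) \<and>
      merge (act C m c) (act E m e) (act D m d, pst P m c d p, pst Q m d e q) = pst R m c e (merge c e (d, p, q))"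
  shows "tamb_iso M C E (tamb_comp C D E P Q) R"
proof -
  have merge_rep: "merge c e (SOME s. s \<in> coend_eqv C D E P Q c e `` {t}) = merge c e t"
    if "c \<in> c_ob (ac C)" "e \<in> c_ob (ac E)" for c e t
    unfolding coend_eqv_def
    by (rule invariant_class_representative[where F = "merge c e"], rule merge_respects_gen[OF that])
  have rep_in: "(SOME t. t \<in> X) \<in> coend_carrier D P Q c e"
    if "c \<in> c_ob (ac C)" "e \<in> c_ob (ac E)" "X \<in> pobj (tamb_comp C D E P Q) c e" for c e X
    using class_representative_in[OF gen_in_carrier[OF that(1,2)]] that(3)
    by (simp add: tamb_comp_def coend_eqv_def)
  show ?thesis
    unfolding tamb_iso_def
  proof (intro exI[of _ "\<lambda>c e X. merge c e (SOME t. t \<in> X)"] conjI ballI allI impI)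
    fix c e assume c: "c \<in> c_ob (ac C)" and e: "e \<in> c_ob (ac E)"
    show "bij_betw (\<lambda>X. merge c e (SOME t. t \<in> X)) (pobj (tamb_comp C D E P Q) c e) (pobj R c e)"
      unfolding tamb_comp_def coend_eqv_def
      using bij_betw_quotient_by_representative[OF merge_respects_gen[OF c e] gen_in_carrier[OF c e]
          merge_in[OF c e] split_in[OF c e] merge_split[OF c e]] split_merge[OF c e]
      unfolding coend_eqv_def by simp
  next
    fix c c' e e' f k X
    assume f: "f \<in> c_hom (ac C) c' c" and k: "k \<in> c_hom (ac E) e e'"
      and X: "X \<in> pobj (tamb_comp C D E P Q) c e"
    have ob: "c \<in> c_ob (ac C)" "c' \<in> c_ob (ac C)" "e \<in> c_ob (ac E)" "e' \<in> c_ob (ac E)"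
      using category.hom_ob[OF cat_C f] category.hom_ob[OF cat_E k] by auto
    have dom_cod: "c_dom (ac C) f = c'" "c_cod (ac E) k = e'"
      using category.hom_dom_cod[OF cat_C f] category.hom_dom_cod[OF cat_E k] by auto
    obtain d p q where dpq: "(SOME t. t \<in> X) = (d, p, q)" by (cases "SOME t. t \<in> X") auto
    have "pmap (tamb_comp C D E P Q) f k X
        = coend_eqv C D E P Q c' e' `` {(d, pmap P f (c_id (ac D) d) p, pmap Q (c_id (ac D) d) k q)}"
      using dpq dom_cod by (simp add: tamb_comp_def)
    then show "merge c' e' (SOME t. t \<in> pmap (tamb_comp C D E P Q) f k X)
        = pmap R f k (merge c e (SOME t. t \<in> X))"
      using merge_rep[OF ob(2,4)] merge_natural[OF f k] rep_in[OF ob(1,3) X] dpq by simp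
  next
    fix m c e X assume m: "m \<in> c_ob (mc M)" and c: "c \<in> c_ob (ac C)" and e: "e \<in> c_ob (ac E)"
      and X: "X \<in> pobj (tamb_comp C D E P Q) c e"
    obtain d p q where dpq: "(SOME t. t \<in> X) = (d, p, q)" by (cases "SOME t. t \<in> X") auto
    have "pst (tamb_comp C D E P Q) m c e X
        = coend_eqv C D E P Q (act C m c) (act E m e) `` {(act D m d, pst P m c d p, pst Q m d e q)}"
      using dpq by (simp add: tamb_comp_def)
    then show "merge (act C m c) (act E m e) (SOME t. t \<in> pst (tamb_comp C D E P Q) m c e X)
        = pst R m c e (merge c e (SOME t. t \<in> X))"
      using merge_rep[OF act_ob_C[OF m c] act_ob_E[OF m e]] merge_strength[OF m c e] rep_in[OF c e X] dpq
      by simp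
  qed
qed

context monoidal_action
begin

definition R_merge :: "'c \<Rightarrow> 'm \<Rightarrow> 'm \<Rightarrow> 'm \<times> 'g \<times> 'f \<Rightarrow> 'g" where
  "R_merge x m e t = (case t of (d, p, q) \<Rightarrow> acp (acp p (Oa q (aid x))) (aas C e m x))"

definition R_split :: "'c \<Rightarrow> 'm \<Rightarrow> 'm \<Rightarrow> 'g \<Rightarrow> 'm \<times> 'g \<times> 'f" where
  "R_split x m e h = (T e m, acp h (inv_in (ac C) (Ac (T e m) x) (Ac e (Ac m x)) (aas C e m x)), mid (T e m))"

context
  fixes x m
  assumes x: "x \<in> c_ob (ac C)" and m: "m \<in> mob"
begin

abbreviation "R_carrier \<equiv> coend_carrier (self_act M) (R_tamb M C x) (R_tamb M (self_act M) m)"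
abbreviation "R_gen \<equiv> coend_gen C (self_act M) (self_act M) (R_tamb M C x) (R_tamb M (self_act M) m)"

lemma R_gen_in_carrier: "c \<in> c_ob (ac C) \<Longrightarrow> e \<in> mob \<Longrightarrow> R_gen c e \<subseteq> R_carrier c e \<times> R_carrier c e"
  using x m by (auto simp: coend_gen_def coend_carrier_def A.in_hom_iff M.in_hom_iff)

lemma R_merge_respects_gen:
  assumes "c \<in> c_ob (ac C)" "e \<in> mob" "(u, v) \<in> R_gen c e"
  shows "R_merge x m e u = R_merge x m e v"
proof -
  obtain d d' g p q where "u = (d', acp (acp (aid c) p) (Oa g (aid x)), q)"
    and "v = (d, p, mcp (mcp g q) (Ta (mid e) (mid m)))" and "g \<in> c_hom (mc M) d d'"
    and "p \<in> c_hom (ac C) c (Ac d x)" and "q \<in> c_hom (mc M) d' (T e m)"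
    using assms(3) by (auto simp: coend_gen_def)
  then show ?thesis using assms(1,2) x m by (simp add: R_merge_def A.in_hom_iff M.in_hom_iff acta_comp_id)
qed

lemma R_merge_in: "c \<in> c_ob (ac C) \<Longrightarrow> e \<in> mob \<Longrightarrow> t \<in> R_carrier c e \<Longrightarrow>
    R_merge x m e t \<in> pobj (R_tamb M C (Ac m x)) c e"
  using x m by (auto simp: R_merge_def coend_carrier_def A.in_hom_iff M.in_hom_iff)

lemma R_split_in: "c \<in> c_ob (ac C) \<Longrightarrow> e \<in> mob \<Longrightarrow> h \<in> pobj (R_tamb M C (Ac m x)) c e \<Longrightarrow>
    R_split x m e h \<in> R_carrier c e"
  using x m by (auto simp: R_split_def coend_carrier_def A.in_hom_iff M.in_hom_iff)

lemma R_merge_split: "c \<in> c_ob (ac C) \<Longrightarrow> e \<in> mob \<Longrightarrow> h \<in> pobj (R_tamb M C (Ac m x)) c e \<Longrightarrow>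
    R_merge x m e (R_split x m e h) = h"
  using x m by (auto simp: R_merge_def R_split_def A.in_hom_iff M.in_hom_iff)

text \<open>A single generating step relates \<open>(d, p, q)\<close> to \<open>R_split\<close> of its image: slide \<open>q : d \<rightarrow> e \<otimes> m\<close>
  from the second factor into the first.\<close>

lemma R_split_merge:
  assumes c: "c \<in> c_ob (ac C)" and e: "e \<in> mob" and t: "t \<in> R_carrier c e"
  shows "(t, R_split x m e (R_merge x m e t))
    \<in> coend_eqv C (self_act M) (self_act M) (R_tamb M C x) (R_tamb M (self_act M) m) c e"
proof -
  obtain d p q where t_eq: "t = (d, p, q)" and d: "d \<in> mob" and p: "p \<in> c_hom (ac C) c (Ac d x)"
    and q: "q \<in> c_hom (mc M) d (T e m)"
    using t by (auto simp: coend_carrier_def)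
  have "((T e m, acp (acp (aid c) p) (Oa q (aid x)), mid (T e m)),
      (d, p, mcp (mcp q (mid (T e m))) (Ta (mid e) (mid m)))) \<in> R_gen c e"
    unfolding coend_gen_def using d p q e m c x by (simp add: M.in_hom_iff) (rule exI[of _ q], simp)
  moreover have "(T e m, acp (acp (aid c) p) (Oa q (aid x)), mid (T e m)) = R_split x m e (R_merge x m e t)"
    and "(d, p, mcp (mcp q (mid (T e m))) (Ta (mid e) (mid m))) = t"
    using t_eq d p q e m c x by (simp_all add: R_merge_def R_split_def M.in_hom_iff A.in_hom_iff)
  ultimately show ?thesis
    unfolding coend_eqv_def by (metis UnI2 converse_iff r_into_rtrancl)
qed

lemma R_merge_natural:
  assumes f: "f \<in> c_hom (ac C) c' c" and k: "k \<in> c_hom (mc M) e e'" and t: "(d, p, q) \<in> R_carrier c e"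
  shows "(d, pmap (R_tamb M C x) f (mid d) p, pmap (R_tamb M (self_act M) m) (mid d) k q) \<in> R_carrier c' e'
    \<and> R_merge x m e' (d, pmap (R_tamb M C x) f (mid d) p, pmap (R_tamb M (self_act M) m) (mid d) k q)
      = pmap (R_tamb M C (Ac m x)) f k (R_merge x m e (d, p, q))"
proof -
  have d: "d \<in> mob" and p: "p \<in> c_hom (ac C) c (Ac d x)" and q: "q \<in> c_hom (mc M) d (T e m)"
    using t by (auto simp: coend_carrier_def)
  have k': "M.arr k" "mdom k = e" "mcod k = e'" using k M.in_hom_iff by auto
  have "acp (Oa (Ta k (mid m)) (aid x)) (aas C e' m x) = acp (aas C e m x) (Oa k (aid (Ac m x)))"
    using aas_natural[of k "mid m" "aid x"] k' x m by simp
  then show ?thesis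
    using f k' d p q x m by (auto simp: R_merge_def coend_carrier_def A.in_hom_iff M.in_hom_iff acta_comp_id)
qed

lemma R_merge_strength:
  assumes m': "m' \<in> mob" and c: "c \<in> c_ob (ac C)" and e: "e \<in> mob" and t: "(d, p, q) \<in> R_carrier c e"
  shows "(T m' d, pst (R_tamb M C x) m' c d p, pst (R_tamb M (self_act M) m) m' d e q) \<in> R_carrier (Ac m' c) (T m' e)
    \<and> R_merge x m (T m' e) (T m' d, pst (R_tamb M C x) m' c d p, pst (R_tamb M (self_act M) m) m' d e q)
      = pst (R_tamb M C (Ac m x)) m' c e (R_merge x m e (d, p, q))"
proof -
  have d: "d \<in> mob" and p: "A.arr p" "adom p = c" "acod p = Ac d x"
    and q: "M.arr q" "mdom q = d" "mcod q = T e m"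
    using t by (auto simp: coend_carrier_def A.in_hom_iff M.in_hom_iff)
  let ?I1 = "inv_in (ac C) (Ac (T m' d) x) (Ac m' (Ac d x)) (aas C m' d x)"
  let ?I2 = "inv_in (ac C) (Ac (T m' (T e m)) x) (Ac m' (Ac (T e m) x)) (aas C m' (T e m) x)"
  let ?ia = "inv_in (mc M) (T (T m' e) m) (T m' (T e m)) (asc M m' e m)"
  let ?J = "inv_in (ac C) (Ac (T m' e) (Ac m x)) (Ac m' (Ac e (Ac m x))) (aas C m' e (Ac m x))"
  have slide: "acp ?I1 (Oa (Ta (mid m') q) (aid x)) = acp (Oa (mid m') (Oa q (aid x))) ?I2"
    using aas_inv_natural[of "mid m'" q "aid x"] m' q x d by simp
  have "R_merge x m (T m' e) (T m' d, pst (R_tamb M C x) m' c d p, pst (R_tamb M (self_act M) m) m' d e q)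
      = acp (Oa (mid m') p) (acp (acp ?I1 (Oa (Ta (mid m') q) (aid x))) (acp (Oa ?ia (aid x)) (aas C (T m' e) m x)))"
    using m' d p q x m e by (simp add: R_merge_def acta_comp_id)
  also have "\<dots> = acp (Oa (mid m') p) (acp (acp (Oa (mid m') (Oa q (aid x))) ?I2)
      (acp (aas C m' (T e m) x) (acp (Oa (mid m') (aas C e m x)) ?J)))"
    by (simp only: slide action_pentagon_inv_asc[OF m' e m x])
  also have "\<dots> = pst (R_tamb M C (Ac m x)) m' c e (R_merge x m e (d, p, q))"
    using m' d p q x m e by (simp add: R_merge_def acta_id_comp)
  finally show ?thesis
    using m' d p q x m e c by (auto simp: coend_carrier_def A.in_hom_iff M.in_hom_iff)
qed

lemma R_tamb_comp_iso:
  "tamb_iso M C (self_act M) (tamb_comp C (self_act M) (self_act M) (R_tamb M C x) (R_tamb M (self_act M) m))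
    (R_tamb M C (Ac m x))"
proof (rule tamb_comp_isoI[where merge = "\<lambda>c. R_merge x m" and split = "\<lambda>c. R_split x m"])
  show "category (ac C)" "category (ac (self_act M))"
    by (simp_all add: A.category_axioms M.category_axioms)
qed (use R_gen_in_carrier R_merge_respects_gen R_merge_in R_split_in R_merge_split R_split_merge
      R_merge_natural R_merge_strength in simp_all)

end

end

context monoidal_action
begin

definition L_merge :: "'c \<Rightarrow> 'm \<Rightarrow> 'm \<Rightarrow> 'm \<times> 'f \<times> 'g \<Rightarrow> 'g" where
  "L_merge x m n t = (case t of (d, p, q) \<Rightarrow>
     acp (acp (inv_in (ac C) (Ac (T n m) x) (Ac n (Ac m x)) (aas C n m x)) (Oa p (aid x))) q)"

definition L_split :: "'c \<Rightarrow> 'm \<Rightarrow> 'm \<Rightarrow> 'g \<Rightarrow> 'm \<times> 'f \<times> 'g" where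
  "L_split x m n h = (T n m, mid (T n m), acp (aas C n m x) h)"

context
  fixes x m
  assumes x: "x \<in> c_ob (ac C)" and m: "m \<in> mob"
begin

abbreviation "L_carrier \<equiv> coend_carrier (self_act M) (L_tamb M (self_act M) m) (L_tamb M C x)"
abbreviation "L_gen \<equiv> coend_gen (self_act M) (self_act M) C (L_tamb M (self_act M) m) (L_tamb M C x)"

lemma L_gen_in_carrier: "n \<in> mob \<Longrightarrow> c \<in> c_ob (ac C) \<Longrightarrow> L_gen n c \<subseteq> L_carrier n c \<times> L_carrier n c"
  using x m by (auto simp: coend_gen_def coend_carrier_def A.in_hom_iff M.in_hom_iff)

lemma L_merge_respects_gen:
  assumes "n \<in> mob" "c \<in> c_ob (ac C)" "(u, v) \<in> L_gen n c"
  shows "L_merge x m n u = L_merge x m n v"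
proof -
  obtain d d' g p q where "u = (d', mcp (mcp (Ta (mid n) (mid m)) p) g, q)"
    and "v = (d, p, acp (acp (Oa g (aid x)) q) (aid c))" and "g \<in> c_hom (mc M) d d'"
    and "p \<in> c_hom (mc M) (T n m) d" and "q \<in> c_hom (ac C) (Ac d' x) c"
    using assms(3) by (auto simp: coend_gen_def)
  then show ?thesis using assms(1,2) x m by (simp add: L_merge_def A.in_hom_iff M.in_hom_iff acta_comp_id)
qed

lemma L_merge_in: "n \<in> mob \<Longrightarrow> c \<in> c_ob (ac C) \<Longrightarrow> t \<in> L_carrier n c \<Longrightarrow>
    L_merge x m n t \<in> pobj (L_tamb M C (Ac m x)) n c"
  using x m by (auto simp: L_merge_def coend_carrier_def A.in_hom_iff M.in_hom_iff)

lemma L_split_in: "n \<in> mob \<Longrightarrow> c \<in> c_ob (ac C) \<Longrightarrow> h \<in> pobj (L_tamb M C (Ac m x)) n c \<Longrightarrow>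
    L_split x m n h \<in> L_carrier n c"
  using x m by (auto simp: L_split_def coend_carrier_def A.in_hom_iff M.in_hom_iff)

lemma L_merge_split: "n \<in> mob \<Longrightarrow> c \<in> c_ob (ac C) \<Longrightarrow> h \<in> pobj (L_tamb M C (Ac m x)) n c \<Longrightarrow>
    L_merge x m n (L_split x m n h) = h"
  using x m by (auto simp: L_merge_def L_split_def A.in_hom_iff M.in_hom_iff)

text \<open>Dually to \<open>R_split_merge\<close>, one generating step slides \<open>p : n \<otimes> m \<rightarrow> d\<close> into the second factor.\<close>

lemma L_split_merge:
  assumes n: "n \<in> mob" and c: "c \<in> c_ob (ac C)" and t: "t \<in> L_carrier n c"
  shows "(t, L_split x m n (L_merge x m n t))
    \<in> coend_eqv (self_act M) (self_act M) C (L_tamb M (self_act M) m) (L_tamb M C x) n c"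
proof -
  obtain d p q where t_eq: "t = (d, p, q)" and d: "d \<in> mob" and p: "p \<in> c_hom (mc M) (T n m) d"
    and q: "q \<in> c_hom (ac C) (Ac d x) c"
    using t by (auto simp: coend_carrier_def)
  have "((d, mcp (mcp (Ta (mid n) (mid m)) (mid (T n m))) p, q),
      (T n m, mid (T n m), acp (acp (Oa p (aid x)) q) (aid c))) \<in> L_gen n c"
    unfolding coend_gen_def using d p q n m c x by (simp add: M.in_hom_iff) (rule exI[of _ p], simp)
  moreover have "(d, mcp (mcp (Ta (mid n) (mid m)) (mid (T n m))) p, q) = t"
    and "(T n m, mid (T n m), acp (acp (Oa p (aid x)) q) (aid c)) = L_split x m n (L_merge x m n t)"
    using t_eq d p q n m c x by (simp_all add: L_merge_def L_split_def M.in_hom_iff A.in_hom_iff)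
  ultimately show ?thesis
    unfolding coend_eqv_def by (metis UnI1 r_into_rtrancl)
qed

lemma L_merge_natural:
  assumes u: "u \<in> c_hom (mc M) n' n" and k: "k \<in> c_hom (ac C) c c'" and t: "(d, p, q) \<in> L_carrier n c"
  shows "(d, pmap (L_tamb M (self_act M) m) u (mid d) p, pmap (L_tamb M C x) (mid d) k q) \<in> L_carrier n' c'
    \<and> L_merge x m n' (d, pmap (L_tamb M (self_act M) m) u (mid d) p, pmap (L_tamb M C x) (mid d) k q)
      = pmap (L_tamb M C (Ac m x)) u k (L_merge x m n (d, p, q))"
proof -
  have d: "d \<in> mob" and p: "M.arr p" "mdom p = T n m" "mcod p = d"
    and q: "A.arr q" "adom q = Ac d x" "acod q = c"
    using t by (auto simp: coend_carrier_def A.in_hom_iff M.in_hom_iff)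
  have u': "M.arr u" "mdom u = n'" "mcod u = n" using u M.in_hom_iff by auto
  have k': "A.arr k" "adom k = c" "acod k = c'" using k A.in_hom_iff by auto
  have ob: "n \<in> mob" "n' \<in> mob" using u' M.arr_dom_cod_ob by metis+
  let ?I' = "inv_in (ac C) (Ac (T n' m) x) (Ac n' (Ac m x)) (aas C n' m x)"
  let ?I = "inv_in (ac C) (Ac (T n m) x) (Ac n (Ac m x)) (aas C n m x)"
  have slide: "acp ?I' (Oa (Ta u (mid m)) (aid x)) = acp (Oa u (aid (Ac m x))) ?I"
    using aas_inv_natural[of u "mid m" "aid x"] u' x m by simp
  have "L_merge x m n' (d, pmap (L_tamb M (self_act M) m) u (mid d) p, pmap (L_tamb M C x) (mid d) k q)
      = acp (acp ?I' (Oa (Ta u (mid m)) (aid x))) (acp (Oa p (aid x)) (acp q k))"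
    using u' k' p q d x m ob by (simp add: L_merge_def acta_comp_id)
  also have "\<dots> = acp (acp (Oa u (aid (Ac m x))) ?I) (acp (Oa p (aid x)) (acp q k))"
    by (simp only: slide)
  also have "\<dots> = pmap (L_tamb M C (Ac m x)) u k (L_merge x m n (d, p, q))"
    using u' k' p q d x m ob by (simp add: L_merge_def)
  finally show ?thesis
    using u' k' p q d x m ob by (auto simp: coend_carrier_def A.in_hom_iff M.in_hom_iff)
qed

lemma L_merge_strength:
  assumes m': "m' \<in> mob" and n: "n \<in> mob" and c: "c \<in> c_ob (ac C)" and t: "(d, p, q) \<in> L_carrier n c"
  shows "(T m' d, pst (L_tamb M (self_act M) m) m' n d p, pst (L_tamb M C x) m' d c q) \<in> L_carrier (T m' n) (Ac m' c)
    \<and> L_merge x m (T m' n) (T m' d, pst (L_tamb M (self_act M) m) m' n d p, pst (L_tamb M C x) m' d c q)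
      = pst (L_tamb M C (Ac m x)) m' n c (L_merge x m n (d, p, q))"
proof -
  have d: "d \<in> mob" and p: "M.arr p" "mdom p = T n m" "mcod p = d"
    and q: "A.arr q" "adom q = Ac d x" "acod q = c"
    using t by (auto simp: coend_carrier_def A.in_hom_iff M.in_hom_iff)
  let ?I1 = "inv_in (ac C) (Ac (T (T m' n) m) x) (Ac (T m' n) (Ac m x)) (aas C (T m' n) m x)"
  let ?I2 = "inv_in (ac C) (Ac (T n m) x) (Ac n (Ac m x)) (aas C n m x)"
  have slide: "acp (Oa (Ta (mid m') p) (aid x)) (aas C m' d x)
      = acp (aas C m' (T n m) x) (Oa (mid m') (Oa p (aid x)))"
    using aas_natural[of "mid m'" p "aid x"] m' p x by simp
  have "L_merge x m (T m' n) (T m' d, pst (L_tamb M (self_act M) m) m' n d p, pst (L_tamb M C x) m' d c q)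
      = acp ?I1 (acp (Oa (asc M m' n m) (aid x))
          (acp (acp (Oa (Ta (mid m') p) (aid x)) (aas C m' d x)) (Oa (mid m') q)))"
    using m' d p q x m n by (simp add: L_merge_def acta_comp_id)
  also have "\<dots> = acp (acp ?I1 (acp (Oa (asc M m' n m) (aid x)) (aas C m' (T n m) x)))
      (acp (Oa (mid m') (Oa p (aid x))) (Oa (mid m') q))"
    using m' d p q x m n by (simp add: slide)
  also have "\<dots> = acp (acp (aas C m' n (Ac m x)) (Oa (mid m') ?I2)) (acp (Oa (mid m') (Oa p (aid x))) (Oa (mid m') q))"
    by (simp only: action_pentagon_inv_aas[OF m' n m x])
  also have "\<dots> = pst (L_tamb M C (Ac m x)) m' n c (L_merge x m n (d, p, q))"
    using m' d p q x m n by (simp add: L_merge_def acta_id_comp)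
  finally show ?thesis
    using m' d p q x m n c by (auto simp: coend_carrier_def A.in_hom_iff M.in_hom_iff)
qed

lemma L_tamb_comp_iso:
  "tamb_iso M (self_act M) C (tamb_comp (self_act M) (self_act M) C (L_tamb M (self_act M) m) (L_tamb M C x))
    (L_tamb M C (Ac m x))"
proof (rule tamb_comp_isoI[where merge = "\<lambda>n c. L_merge x m n" and split = "\<lambda>n c. L_split x m n"])
  show "category (ac (self_act M))" "category (ac C)"
    by (simp_all add: A.category_axioms M.category_axioms)
qed (use L_gen_in_carrier L_merge_respects_gen L_merge_in L_split_in L_merge_split L_split_merge
      L_merge_natural L_merge_strength in simp_all)

end

end

theorem mainTheorem1:
  fixes M :: "('m,'f) moncat" and C :: "('m,'f,'c,'g) actegory"
  assumes "is_moncat M" and "is_actegory M C"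
  shows "tamb_iso M (self_act M) (self_act M) (R_tamb M (self_act M) (mI M)) (hom_tamb M (self_act M))
       \<and> tamb_iso M (self_act M) (self_act M) (L_tamb M (self_act M) (mI M)) (hom_tamb M (self_act M))
       \<and> (\<forall>x\<in>c_ob (ac C). \<forall>m\<in>c_ob (mc M).
            tamb_iso M C (self_act M)
              (tamb_comp C (self_act M) (self_act M) (R_tamb M C x) (R_tamb M (self_act M) m))
              (R_tamb M C (act C m x)))
       \<and> (\<forall>x\<in>c_ob (ac C). \<forall>m\<in>c_ob (mc M).
            tamb_iso M (self_act M) C
              (tamb_comp (self_act M) (self_act M) C (L_tamb M (self_act M) m) (L_tamb M C x))
              (L_tamb M C (act C m x)))"
proof -
  interpret monoidal_action M C
    \<comment> \<open>\<open>is_moncat M\<close> is already a conjunct of \<open>is_actegory M C\<close>\<close>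
    using assms(2) by unfold_locales
  show ?thesis
    using R_tamb_unit_iso_hom L_tamb_unit_iso_hom R_tamb_comp_iso L_tamb_comp_iso by blast
qed

end
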